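(* Let $E$ be a Banach lattice. Then the norm topology and the unbounded norm topology on $E$ are both locally interval complete solidly submetrisable.
   Context: All vector lattices are real and Archimedean; linear topologies are Hausdorff. A locally solid topology on a vector lattice is a linear topology such that zero has a neighbourhood basis of solid sets. For a Banach lattice $E$ with norm topology $\tau$, the unbounded norm topology (un-topology) is the locally solid topology on $E$ having as neighbourhood basis at zero the sets $\{x\in E: \| |x|\wedge|y| \|<\varepsilon\}$ for $\varepsilon>0$ and $y\in E$. For $x\in E$, $B_x$ denotes the band generated by $x$. A locally solid topology $\tau$ on $E$ is locally interval complete solidly submetrisable if for every $x\in E^+$ there exists a metrisable locally solid topology $\widetilde\tau_x$ on $B_x$ such that (a) $\tau|_{B_x}$ is finer than $\widetilde\tau_x$, and (b) every $\widetilde\tau_x$-Cauchy sequence in $[0,x]$ is $\widetilde\tau_x$-convergent to an element of $[0,x]$. *)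

theory Defs
  imports "HOL-Analysis.Analysis" "HOL-Library.Lattice_Algebras"
begin

class banach_lattice = banach + ordered_real_vector + lattice_ab_group_add_abs +
  assumes norm_lattice_mono: "\<bar>x\<bar> \<le> \<bar>y\<bar> \<Longrightarrow> norm x \<le> norm y"

definition solid_in :: "'a::banach_lattice set \<Rightarrow> 'a set \<Rightarrow> bool" where
  "solid_in L S \<longleftrightarrow> S \<subseteq> L \<and> (\<forall>y\<in>S. \<forall>z\<in>L. \<bar>z\<bar> \<le> \<bar>y\<bar> \<longrightarrow> z \<in> S)"

definition ideal_lat :: "'a::banach_lattice set \<Rightarrow> bool" where
  "ideal_lat B \<longleftrightarrow> 0 \<in> B \<and> (\<forall>a\<in>B. \<forall>b\<in>B. a + b \<in> B) \<and> (\<forall>c. \<forall>a\<in>B. c *\<^sub>R a \<in> B)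
      \<and> solid_in UNIV B"

definition is_band :: "'a::banach_lattice set \<Rightarrow> bool" where
  "is_band B \<longleftrightarrow> ideal_lat B \<and>
     (\<forall>D s. D \<subseteq> B \<and> (\<forall>d\<in>D. d \<le> s) \<and> (\<forall>u. (\<forall>d\<in>D. d \<le> u) \<longrightarrow> s \<le> u) \<longrightarrow> s \<in> B)"

definition band_gen :: "'a::banach_lattice \<Rightarrow> 'a set" where
  "band_gen x = \<Inter>{B. is_band B \<and> x \<in> B}"

definition linear_topology_on :: "'a::banach_lattice set \<Rightarrow> 'a topology \<Rightarrow> bool" where
  "linear_topology_on L T \<longleftrightarrow> topspace T = L \<and> Hausdorff_space T \<and>
     continuous_map (prod_topology T T) T (\<lambda>(a, b). a + b) \<and>
     continuous_map (prod_topology euclideanreal T) T (\<lambda>(c, a). c *\<^sub>R a)"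

definition locally_solid_on :: "'a::banach_lattice set \<Rightarrow> 'a topology \<Rightarrow> bool" where
  "locally_solid_on L T \<longleftrightarrow> linear_topology_on L T \<and>
     (\<forall>U. openin T U \<and> 0 \<in> U \<longrightarrow>
        (\<exists>S V. solid_in L S \<and> openin T V \<and> 0 \<in> V \<and> V \<subseteq> S \<and> S \<subseteq> U))"

definition top_cauchy :: "'a::banach_lattice topology \<Rightarrow> (nat \<Rightarrow> 'a) \<Rightarrow> bool" where
  "top_cauchy T s \<longleftrightarrow> (\<forall>V. openin T V \<and> 0 \<in> V \<longrightarrow>
      (\<exists>N. \<forall>m\<ge>N. \<forall>n\<ge>N. s m - s n \<in> V))"

definition lics_submetrisable :: "'a::banach_lattice topology \<Rightarrow> bool" where
  "lics_submetrisable \<tau> \<longleftrightarrow> locally_solid_on UNIV \<tau> \<and>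
     (\<forall>x. 0 \<le> x \<longrightarrow>
        (\<exists>\<sigma>. locally_solid_on (band_gen x) \<sigma> \<and> metrizable_space \<sigma> \<and>
             (\<forall>U. openin \<sigma> U \<longrightarrow> openin (subtopology \<tau> (band_gen x)) U) \<and>
             (\<forall>s. (\<forall>n. s n \<in> {0..x}) \<and> top_cauchy \<sigma> s \<longrightarrow>
                  (\<exists>l\<in>{0..x}. limitin \<sigma> s l sequentially))))"

definition un_topology :: "'a::banach_lattice topology" where
  "un_topology = topology (\<lambda>U. \<forall>x\<in>U. \<exists>\<epsilon>>0. \<exists>y.
      {z. norm (inf \<bar>z - x\<bar> \<bar>y\<bar>) < \<epsilon>} \<subseteq> U)"

end

theory Submission
  imports Defs
begin

text \<open>Both topologies are generated by directed families of lattice gauges (subadditive, solid,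
  dominated by the norm): the norm itself, resp. the functionals \<open>v \<mapsto> norm (inf \<bar>v\<bar> \<bar>y\<bar>)\<close>.
  On the band \<open>B\<^sub>x\<close> take the topology of the single gauge \<open>norm\<close>, resp. \<open>v \<mapsto> norm (inf \<bar>v\<bar> x)\<close>.
  It is metrisable since this gauge separates the points of \<open>B\<^sub>x\<close> (an element of
  \<open>B\<^sub>x \<subseteq> {x}\<^sup>d\<^sup>d\<close> disjoint from \<open>x\<close> vanishes), and coarser than the restricted topology since
  its gauge belongs to the generating family. On \<open>[0, x]\<close> the gauge agrees with the norm, so a
  Cauchy sequence there is norm Cauchy; its norm limit stays in the norm closed interval \<open>[0, x]\<close>
  and is also a limit for the coarser topology.\<close>

section \<open>Vector lattice arithmetic\<close>

lemma inf_add_le_add_inf: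
  fixes p q w :: "'a::lattice_ab_group_add"
  assumes "0 \<le> p" "0 \<le> q" "0 \<le> w"
  shows "inf (p + q) w \<le> inf p w + inf q w"
proof -
  have "inf (p + q) w \<le> inf (p + inf q w) (w + inf q w)"
    using assms by (simp add: add_inf_distrib_left add_increasing add_increasing2 le_infI1 le_infI2)
  also have "\<dots> = inf p w + inf q w" by (simp only: add_inf_distrib_right)
  finally show ?thesis .
qed

lemma sup_eq_add_if_inf_eq_0:
  fixes a b :: "'a::lattice_ab_group_add"
  assumes "inf a b = 0" shows "sup a b = a + b"
  using add_eq_inf_sup[of a b] assms by simp

lemma scaleR_inf_nonneg:
  fixes a b :: "'a::{ordered_real_vector, lattice}"
  assumes "0 \<le> t" shows "t *\<^sub>R inf a b = inf (t *\<^sub>R a) (t *\<^sub>R b)"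
proof (rule order.antisym)
  show "t *\<^sub>R inf a b \<le> inf (t *\<^sub>R a) (t *\<^sub>R b)"
    using assms by (simp add: scaleR_left_mono)
  show "inf (t *\<^sub>R a) (t *\<^sub>R b) \<le> t *\<^sub>R inf a b"
  proof (cases "t = 0")
    case False
    with assms have t: "0 < t" by simp
    have "inverse t *\<^sub>R inf (t *\<^sub>R a) (t *\<^sub>R b) \<le> inverse t *\<^sub>R (t *\<^sub>R a)"
      and "inverse t *\<^sub>R inf (t *\<^sub>R a) (t *\<^sub>R b) \<le> inverse t *\<^sub>R (t *\<^sub>R b)"
      using t by (intro scaleR_left_mono; simp)+
    with t have "inverse t *\<^sub>R inf (t *\<^sub>R a) (t *\<^sub>R b) \<le> inf a b" by simp
    then have "t *\<^sub>R (inverse t *\<^sub>R inf (t *\<^sub>R a) (t *\<^sub>R b)) \<le> t *\<^sub>R inf a b"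
      using t by (intro scaleR_left_mono) auto
    with t show ?thesis by simp
  qed simp
qed

lemma scaleR_sup_nonneg:
  fixes a b :: "'a::{ordered_real_vector, lattice_ab_group_add}"
  assumes "0 \<le> t" shows "t *\<^sub>R sup a b = sup (t *\<^sub>R a) (t *\<^sub>R b)"
proof -
  have "t *\<^sub>R sup a b = - (t *\<^sub>R inf (- a) (- b))" by (simp only: sup_eq_neg_inf[of a b] scaleR_minus_right)
  also have "\<dots> = sup (t *\<^sub>R a) (t *\<^sub>R b)"
    by (simp only: scaleR_inf_nonneg[OF assms] scaleR_minus_right neg_inf_eq_sup minus_minus)
  finally show ?thesis .
qed

lemma abs_scaleR_lattice:
  fixes a :: "'a::{ordered_real_vector, lattice_ab_group_add_abs}"
  shows "\<bar>c *\<^sub>R a\<bar> = \<bar>c\<bar> *\<^sub>R \<bar>a\<bar>"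
proof -
  have nonneg: "\<bar>t *\<^sub>R b\<bar> = t *\<^sub>R \<bar>b\<bar>" if "0 \<le> t" for t and b :: 'a
    using scaleR_sup_nonneg[OF that, of b "-b"] by (simp add: abs_lattice)
  show ?thesis
  proof (cases "0 \<le> c")
    case False
    then have "\<bar>c *\<^sub>R a\<bar> = (-c) *\<^sub>R \<bar>-a\<bar>"
      using nonneg[of "-c" "-a"] by simp
    with False show ?thesis by simp
  qed (simp add: nonneg)
qed

lemma inf_scaleR_le_scaleR_inf:
  fixes w y :: "'a::{ordered_real_vector, lattice}"
  assumes "1 \<le> t" "0 \<le> y"
  shows "inf (t *\<^sub>R w) y \<le> t *\<^sub>R inf w y"
proof -
  have "y \<le> t *\<^sub>R y" using scaleR_right_mono[OF assms] by simp
  then have "inf (t *\<^sub>R w) y \<le> inf (t *\<^sub>R w) (t *\<^sub>R y)" by (simp add: le_infI1 inf.coboundedI2)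
  also have "\<dots> = t *\<^sub>R inf w y" using assms by (simp add: scaleR_inf_nonneg)
  finally show ?thesis .
qed

lemma abs_diff_le_if_atLeastAtMost:
  fixes a b x :: "'a::lattice_ab_group_add_abs"
  assumes "a \<in> {0..x}" "b \<in> {0..x}" shows "\<bar>a - b\<bar> \<le> x"
proof (rule abs_leI)
  show "a - b \<le> x" using assms by (metis atLeastAtMost_iff diff_le_eq add_increasing2 order.trans)
  show "- (a - b) \<le> x" using assms by (metis atLeastAtMost_iff minus_diff_eq diff_le_eq add_increasing2 order.trans)
qed

lemma norm_mono_nonneg:
  fixes a b :: "'a::banach_lattice"
  assumes "0 \<le> a" "a \<le> b" shows "norm a \<le> norm b"
  using assms by (intro norm_lattice_mono) (simp add: abs_of_nonneg)

lemma norm_abs_lattice: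
  fixes a :: "'a::banach_lattice" shows "norm \<bar>a\<bar> = norm a"
  by (metis abs_idempotent norm_lattice_mono order.antisym order.refl)

lemma tendsto_lattice_abs [tendsto_intros]:
  fixes f :: "'b \<Rightarrow> 'a::banach_lattice"
  assumes "(f \<longlongrightarrow> l) F" shows "((\<lambda>x. \<bar>f x\<bar>) \<longlongrightarrow> \<bar>l\<bar>) F"
  unfolding tendsto_iff
proof (intro allI impI)
  fix e :: real assume "0 < e"
  with assms have "\<forall>\<^sub>F x in F. dist (f x) l < e" by (simp add: tendsto_iff)
  moreover have "dist \<bar>f x\<bar> \<bar>l\<bar> \<le> dist (f x) l" for x
    unfolding dist_norm by (intro norm_lattice_mono abs_triangle_ineq3)
  ultimately show "\<forall>\<^sub>F x in F. dist \<bar>f x\<bar> \<bar>l\<bar> < e"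
    by (metis (mono_tags, lifting) eventually_mono order.strict_trans1)
qed

lemma continuous_on_lattice_abs [continuous_intros]:
  fixes f :: "'b::topological_space \<Rightarrow> 'a::banach_lattice"
  shows "continuous_on S f \<Longrightarrow> continuous_on S (\<lambda>x. \<bar>f x\<bar>)"
  unfolding continuous_on_def by (auto intro: tendsto_lattice_abs)

lemma closed_atLeastAtMost_lattice:
  fixes a b :: "'a::banach_lattice" shows "closed {a..b}"
proof -
  have "{a..b} = {x. \<bar>x - a\<bar> = x - a} \<inter> {x. \<bar>b - x\<bar> = b - x}"
    by (auto simp: abs_of_nonneg) (metis abs_ge_zero diff_ge_0_iff_ge)+
  moreover have "closed {x. \<bar>x - a\<bar> = x - a}" "closed {x. \<bar>b - x\<bar> = b - x}"
    by (intro closed_Collect_eq continuous_intros)+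
  ultimately show ?thesis by (simp add: closed_Int)
qed

section \<open>Bands\<close>

lemma inf_pprt_Sup_eq_0:
  fixes D :: "'a::lattice_ab_group_add_abs set"
  assumes w: "0 \<le> w" and disj: "\<forall>d\<in>D. inf \<bar>d\<bar> w = 0"
    and ub: "\<forall>d\<in>D. d \<le> s" and lub: "\<forall>u. (\<forall>d\<in>D. d \<le> u) \<longrightarrow> s \<le> u"
  shows "inf (pprt s) w = 0"
proof -
  define u where "u = sup (pprt s) w - w"
  have "d \<le> u" if d: "d \<in> D" for d
  proof -
    have "inf (pprt d) w \<le> inf \<bar>d\<bar> w" by (intro inf_mono) (simp_all add: abs_prts)
    with disj d w have "inf (pprt d) w = 0" by (simp add: order.antisym)
    then have "pprt d = sup (pprt d) w - w" by (simp add: sup_eq_add_if_inf_eq_0)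
    also have "\<dots> \<le> u" unfolding u_def using ub d by (intro diff_right_mono sup_mono) simp_all
    finally show ?thesis by (simp add: pprt_def)
  qed
  with lub have "s \<le> u" by blast
  moreover have "0 \<le> u" by (simp add: u_def)
  ultimately have "pprt s \<le> u" by (simp add: pprt_def)
  then have "pprt s + w \<le> sup (pprt s) w" by (simp add: u_def le_diff_eq)
  then have "inf (pprt s) w \<le> 0" using add_eq_inf_sup[of "pprt s" w] by simp
  with w show ?thesis by (simp add: order.antisym)
qed

lemma inf_nprt_Sup_eq_0:
  fixes D :: "'a::lattice_ab_group_add_abs set"
  assumes w: "0 \<le> w" and disj: "\<forall>d\<in>D. inf \<bar>d\<bar> w = 0"
    and ub: "\<forall>d\<in>D. d \<le> s" and "d \<in> D"
  shows "inf (- nprt s) w = 0"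
proof -
  have "- nprt s \<le> - nprt d" using ub \<open>d \<in> D\<close> by simp
  also have "\<dots> \<le> \<bar>d\<bar>" by (simp add: abs_prts)
  finally have "inf (- nprt s) w \<le> inf \<bar>d\<bar> w" by (rule inf_mono) simp
  with disj \<open>d \<in> D\<close> w show ?thesis by (simp add: order.antisym)
qed

lemma inf_abs_Sup_eq_0:
  fixes D :: "'a::lattice_ab_group_add_abs set"
  assumes w: "0 \<le> w" and disj: "\<forall>d\<in>D. inf \<bar>d\<bar> w = 0"
    and ub: "\<forall>d\<in>D. d \<le> s" and lub: "\<forall>u. (\<forall>d\<in>D. d \<le> u) \<longrightarrow> s \<le> u"
  shows "inf \<bar>s\<bar> w = 0"
proof (cases "D = {}")
  case True
  with lub have "s \<le> s - \<bar>s\<bar>" by blast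
  then have "s = 0" by (simp add: le_diff_eq)
  with w show ?thesis by (simp add: inf_absorb1)
next
  case False
  then obtain d where "d \<in> D" by blast
  have "inf \<bar>s\<bar> w = inf (pprt s + - nprt s) w" by (simp add: abs_prts)
  also have "\<dots> \<le> inf (pprt s) w + inf (- nprt s) w" using w by (intro inf_add_le_add_inf) simp_all
  also have "\<dots> = 0"
    using inf_pprt_Sup_eq_0[OF assms] inf_nprt_Sup_eq_0[OF w disj ub \<open>d \<in> D\<close>] by simp
  finally show ?thesis using w by (simp add: order.antisym)
qed

definition disjoint_complement :: "'a::banach_lattice set \<Rightarrow> 'a set" where
  "disjoint_complement S = {z. \<forall>w\<in>S. inf \<bar>z\<bar> \<bar>w\<bar> = 0}"

lemma is_band_disjoint_complement: "is_band (disjoint_complement S)"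
  unfolding is_band_def ideal_lat_def solid_in_def
proof (intro conjI ballI allI impI)
  show "0 \<in> disjoint_complement S" by (simp add: disjoint_complement_def inf_absorb1)
  show "disjoint_complement S \<subseteq> UNIV" by simp
next
  fix a b assume ab: "a \<in> disjoint_complement S" "b \<in> disjoint_complement S"
  have "inf \<bar>a + b\<bar> \<bar>w\<bar> \<le> 0" if "w \<in> S" for w
  proof -
    have "inf \<bar>a + b\<bar> \<bar>w\<bar> \<le> inf (\<bar>a\<bar> + \<bar>b\<bar>) \<bar>w\<bar>" by (intro inf_mono abs_triangle_ineq order.refl)
    also have "\<dots> \<le> inf \<bar>a\<bar> \<bar>w\<bar> + inf \<bar>b\<bar> \<bar>w\<bar>" by (intro inf_add_le_add_inf) simp_all
    finally show ?thesis using ab that by (simp add: disjoint_complement_def)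
  qed
  then show "a + b \<in> disjoint_complement S"
    by (simp add: disjoint_complement_def order.antisym)
next
  fix c :: real and a assume a: "a \<in> disjoint_complement S"
  have "\<bar>c *\<^sub>R a\<bar> \<le> (\<bar>c\<bar> + 1) *\<^sub>R \<bar>a\<bar>"
    unfolding abs_scaleR_lattice by (intro scaleR_right_mono) auto
  then have bound: "inf \<bar>c *\<^sub>R a\<bar> \<bar>w\<bar> \<le> (\<bar>c\<bar> + 1) *\<^sub>R inf \<bar>a\<bar> \<bar>w\<bar>" for w
    by (meson inf_mono inf_scaleR_le_scaleR_inf order.refl order.trans abs_ge_zero
        add_increasing zero_le_one)
  then have "inf \<bar>c *\<^sub>R a\<bar> \<bar>w\<bar> \<le> 0" if "w \<in> S" for w
    using a that bound[of w] by (simp add: disjoint_complement_def)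
  then show "c *\<^sub>R a \<in> disjoint_complement S"
    by (simp add: disjoint_complement_def order.antisym)
next
  fix y z assume "y \<in> disjoint_complement S" "\<bar>z\<bar> \<le> \<bar>y\<bar>"
  then have "inf \<bar>z\<bar> \<bar>w\<bar> \<le> 0" if "w \<in> S" for w
    using inf_mono[OF \<open>\<bar>z\<bar> \<le> \<bar>y\<bar>\<close> order.refl, of "\<bar>w\<bar>"] that
    by (simp add: disjoint_complement_def)
  then show "z \<in> disjoint_complement S" by (simp add: disjoint_complement_def order.antisym)
next
  fix D s
  assume "D \<subseteq> disjoint_complement S \<and> (\<forall>d\<in>D. d \<le> s) \<and> (\<forall>u. (\<forall>d\<in>D. d \<le> u) \<longrightarrow> s \<le> u)"
  then have D: "D \<subseteq> disjoint_complement S" and ub: "\<forall>d\<in>D. d \<le> s"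
    and lub: "\<forall>u. (\<forall>d\<in>D. d \<le> u) \<longrightarrow> s \<le> u" by blast+
  have "inf \<bar>s\<bar> \<bar>w\<bar> = 0" if "w \<in> S" for w
  proof (rule inf_abs_Sup_eq_0[OF abs_ge_zero _ ub lub])
    show "\<forall>d\<in>D. inf \<bar>d\<bar> \<bar>w\<bar> = 0" using D that unfolding disjoint_complement_def by blast
  qed
  then show "s \<in> disjoint_complement S" by (simp add: disjoint_complement_def)
qed

lemma ideal_lat_Inter:
  assumes "\<And>B. B \<in> F \<Longrightarrow> ideal_lat B" shows "ideal_lat (\<Inter>F)"
  unfolding ideal_lat_def solid_in_def
  by (intro conjI ballI allI impI; use assms[unfolded ideal_lat_def solid_in_def] in blast)

lemma ideal_lat_band_gen: "ideal_lat (band_gen x)"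
  unfolding band_gen_def by (rule ideal_lat_Inter) (simp add: is_band_def)

lemma subspace_if_ideal_lat: "ideal_lat B \<Longrightarrow> subspace B"
  unfolding ideal_lat_def subspace_def by blast

lemma ideal_lat_solid: "ideal_lat B \<Longrightarrow> y \<in> B \<Longrightarrow> \<bar>z\<bar> \<le> \<bar>y\<bar> \<Longrightarrow> z \<in> B"
  unfolding ideal_lat_def solid_in_def by blast

lemma atLeastAtMost_subset_ideal_lat:
  fixes x :: "'a::banach_lattice"
  assumes "ideal_lat B" "x \<in> B" shows "{0..x} \<subseteq> B"
proof
  fix v assume v: "v \<in> {0..x}"
  then have "0 \<le> x" by auto
  with v have "\<bar>v\<bar> \<le> \<bar>x\<bar>" by (simp add: abs_of_nonneg)
  with assms show "v \<in> B" by (rule ideal_lat_solid)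
qed

lemma mem_band_gen: "x \<in> band_gen x"
  unfolding band_gen_def by blast

lemma band_gen_subset: "is_band B \<Longrightarrow> x \<in> B \<Longrightarrow> band_gen x \<subseteq> B"
  unfolding band_gen_def by blast

lemma band_gen_disjoint_eq_0:
  fixes x z :: "'a::banach_lattice"
  assumes "z \<in> band_gen x" "inf \<bar>z\<bar> \<bar>x\<bar> = 0"
  shows "z = 0"
proof -
  let ?X = "disjoint_complement {x}"
  have "x \<in> disjoint_complement ?X" by (simp add: disjoint_complement_def inf_commute)
  then have "z \<in> disjoint_complement ?X"
    using band_gen_subset[OF is_band_disjoint_complement] assms(1) by blast
  moreover have "z \<in> ?X" using assms(2) by (simp add: disjoint_complement_def)
  ultimately have "inf \<bar>z\<bar> \<bar>z\<bar> = 0" unfolding disjoint_complement_def by blast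
  then show ?thesis by simp
qed

section \<open>Lattice gauges and the topologies they generate\<close>

text \<open>No homogeneity is required, so that the functionals \<open>v \<mapsto> norm (inf \<bar>v\<bar> \<bar>y\<bar>)\<close>
  generating the unbounded norm topology qualify.\<close>

definition lattice_gauge :: "('a::banach_lattice \<Rightarrow> real) \<Rightarrow> bool" where
  "lattice_gauge p \<longleftrightarrow> (\<forall>u v. p (u + v) \<le> p u + p v) \<and> (\<forall>u v. \<bar>u\<bar> \<le> \<bar>v\<bar> \<longrightarrow> p u \<le> p v) \<and>
     (\<forall>z. p z \<le> norm z)"

lemma lattice_gaugeI:
  assumes "\<And>u v. p (u + v) \<le> p u + p v" "\<And>u v. \<bar>u\<bar> \<le> \<bar>v\<bar> \<Longrightarrow> p u \<le> p v" "\<And>z. p z \<le> norm z"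
  shows "lattice_gauge p"
  using assms unfolding lattice_gauge_def by blast

context
  fixes p :: "'a::banach_lattice \<Rightarrow> real"
  assumes p: "lattice_gauge p"
begin

lemma lattice_gauge_add: "p (u + v) \<le> p u + p v"
  and lattice_gauge_mono: "\<bar>u\<bar> \<le> \<bar>v\<bar> \<Longrightarrow> p u \<le> p v"
  and lattice_gauge_le_norm: "p z \<le> norm z"
  using p unfolding lattice_gauge_def by blast+

lemma lattice_gauge_zero: "p 0 = 0"
  using lattice_gauge_add[of 0 0] lattice_gauge_le_norm[of 0] by simp

lemma lattice_gauge_minus: "p (- z) = p z"
  using lattice_gauge_mono[of z "- z"] lattice_gauge_mono[of "- z" z] by simp

lemma lattice_gauge_nonneg: "0 \<le> p z"
  using lattice_gauge_add[of z "- z"] by (simp add: lattice_gauge_zero lattice_gauge_minus)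

lemma lattice_gauge_diff_commute: "p (a - b) = p (b - a)"
  using lattice_gauge_minus[of "a - b"] by simp

lemma lattice_gauge_diff_triangle: "p (a - c) \<le> p (a - b) + p (b - c)"
  using lattice_gauge_add[of "a - b" "b - c"] by simp

lemma lattice_gauge_of_nat_scaleR: "p (of_nat n *\<^sub>R z) \<le> of_nat n * p z"
proof (induction n)
  case (Suc n)
  have "p (of_nat (Suc n) *\<^sub>R z) \<le> p (of_nat n *\<^sub>R z) + p z"
    using lattice_gauge_add[of "of_nat n *\<^sub>R z" z] by (simp add: algebra_simps)
  with Suc.IH show ?case by (simp add: algebra_simps)
qed (simp add: lattice_gauge_zero)

lemma lattice_gauge_scaleR_le: "p (c *\<^sub>R z) \<le> (\<bar>c\<bar> + 1) * p z"
proof -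
  define n where "n = nat \<lceil>\<bar>c\<bar>\<rceil>"
  have n: "\<bar>c\<bar> \<le> real n" "real n \<le> \<bar>c\<bar> + 1" unfolding n_def by linarith+
  have "\<bar>c *\<^sub>R z\<bar> \<le> \<bar>real n *\<^sub>R z\<bar>"
    unfolding abs_scaleR_lattice using n(1) by (intro scaleR_right_mono) auto
  then have "p (c *\<^sub>R z) \<le> p (real n *\<^sub>R z)" by (rule lattice_gauge_mono)
  also have "\<dots> \<le> real n * p z" by (rule lattice_gauge_of_nat_scaleR)
  also have "\<dots> \<le> (\<bar>c\<bar> + 1) * p z" using n(2) lattice_gauge_nonneg by (rule mult_right_mono)
  finally show ?thesis .
qed

lemma lattice_gauge_scaleR_diff_le:
  "p (c' *\<^sub>R z - c *\<^sub>R a) \<le> (\<bar>c'\<bar> + 1) * p (z - a) + \<bar>c' - c\<bar> * norm a"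
proof -
  have "p (c' *\<^sub>R z - c *\<^sub>R a) \<le> p (c' *\<^sub>R (z - a)) + p ((c' - c) *\<^sub>R a)"
    using lattice_gauge_add[of "c' *\<^sub>R (z - a)" "(c' - c) *\<^sub>R a"]
    by (simp add: algebra_simps)
  also have "\<dots> \<le> (\<bar>c'\<bar> + 1) * p (z - a) + norm ((c' - c) *\<^sub>R a)"
    by (intro add_mono lattice_gauge_scaleR_le lattice_gauge_le_norm)
  finally show ?thesis by simp
qed

lemma lattice_gauge_scaleR_diff_less:
  assumes "0 < e" "\<bar>c' - c\<bar> < min 1 (e / (2 * (norm a + 1)))" "p (z - a) < e / (2 * (\<bar>c\<bar> + 2))"
  shows "p (c' *\<^sub>R z - c *\<^sub>R a) < e"
proof -
  have K: "0 < \<bar>c\<bar> + 2" and na: "0 < norm a + 1" by (simp_all add: add_nonneg_pos)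
  have "(\<bar>c'\<bar> + 1) * p (z - a) \<le> (\<bar>c\<bar> + 2) * p (z - a)"
    using assms(2) lattice_gauge_nonneg by (intro mult_right_mono) auto
  also have "\<dots> < e / 2" using assms(3) K by (simp add: field_simps)
  finally have first: "(\<bar>c'\<bar> + 1) * p (z - a) < e / 2" .
  have "\<bar>c' - c\<bar> * norm a \<le> e / (2 * (norm a + 1)) * norm a"
    using assms(2) by (intro mult_right_mono) auto
  also have "\<dots> \<le> e / (2 * (norm a + 1)) * (norm a + 1)"
    using assms(1) na by (intro mult_left_mono) simp_all
  also have "\<dots> = e / 2" using na by (simp add: field_simps)
  finally show ?thesis using first lattice_gauge_scaleR_diff_le[of c' z c a] by linarith
qed

end

definition gauge_ball :: "'a::banach_lattice set \<Rightarrow> ('a \<Rightarrow> real) \<Rightarrow> 'a \<Rightarrow> real \<Rightarrow> 'a set" where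
  "gauge_ball L p a e = {z \<in> L. p (z - a) < e}"

definition gauge_open :: "'a::banach_lattice set \<Rightarrow> ('a \<Rightarrow> real) set \<Rightarrow> 'a set \<Rightarrow> bool" where
  "gauge_open L P U \<longleftrightarrow> U \<subseteq> L \<and> (\<forall>a\<in>U. \<exists>p\<in>P. \<exists>e>0. gauge_ball L p a e \<subseteq> U)"

lemma gauge_openI:
  "U \<subseteq> L \<Longrightarrow> (\<And>a. a \<in> U \<Longrightarrow> \<exists>p\<in>P. \<exists>e>0. gauge_ball L p a e \<subseteq> U) \<Longrightarrow> gauge_open L P U"
  unfolding gauge_open_def by blast

lemma gauge_openD:
  assumes "gauge_open L P U"
  shows "U \<subseteq> L" and "a \<in> U \<Longrightarrow> \<exists>p\<in>P. \<exists>e>0. gauge_ball L p a e \<subseteq> U"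
  using assms unfolding gauge_open_def by blast+

definition gauge_topology :: "'a::banach_lattice set \<Rightarrow> ('a \<Rightarrow> real) set \<Rightarrow> 'a topology" where
  "gauge_topology L P = topology (gauge_open L P)"

lemma centre_in_gauge_ball: "lattice_gauge p \<Longrightarrow> a \<in> L \<Longrightarrow> 0 < e \<Longrightarrow> a \<in> gauge_ball L p a e"
  by (simp add: gauge_ball_def lattice_gauge_zero)

lemma solid_in_gauge_ball:
  assumes "lattice_gauge p" shows "solid_in L (gauge_ball L p 0 e)"
proof -
  have "p z < e" if "\<bar>z\<bar> \<le> \<bar>y\<bar>" "p y < e" for y z
    using lattice_gauge_mono[OF assms that(1)] that(2) by linarith
  then show ?thesis unfolding solid_in_def gauge_ball_def by auto
qed

locale gauge_family =
  fixes L :: "'a::banach_lattice set" and P :: "('a \<Rightarrow> real) set"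
  assumes subspace: "subspace L"
    and nonempty: "P \<noteq> {}"
    and gauge: "p \<in> P \<Longrightarrow> lattice_gauge p"
    and directed: "p \<in> P \<Longrightarrow> q \<in> P \<Longrightarrow> \<exists>r\<in>P. p \<le> r \<and> q \<le> r"
    and separating: "z \<in> L \<Longrightarrow> z \<noteq> 0 \<Longrightarrow> \<exists>p\<in>P. 0 < p z"
begin

lemma istopology_gauge_open: "istopology (gauge_open L P)"
  unfolding istopology_def
proof (intro conjI allI impI)
  fix S T assume S: "gauge_open L P S" and T: "gauge_open L P T"
  show "gauge_open L P (S \<inter> T)"
  proof (rule gauge_openI)
    show "S \<inter> T \<subseteq> L" using gauge_openD(1)[OF S] by blast
    fix a assume a: "a \<in> S \<inter> T"
    obtain p e1 where p: "p \<in> P" "e1 > 0" "gauge_ball L p a e1 \<subseteq> S"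
      using gauge_openD(2)[OF S] a by blast
    obtain q e2 where q: "q \<in> P" "e2 > 0" "gauge_ball L q a e2 \<subseteq> T"
      using gauge_openD(2)[OF T] a by blast
    obtain r where r: "r \<in> P" "p \<le> r" "q \<le> r" using directed p(1) q(1) by blast
    have "gauge_ball L r a (min e1 e2) \<subseteq> gauge_ball L p a e1 \<inter> gauge_ball L q a e2"
    proof
      fix z assume "z \<in> gauge_ball L r a (min e1 e2)"
      moreover have "p (z - a) \<le> r (z - a)" "q (z - a) \<le> r (z - a)"
        using r(2,3) by (simp_all add: le_fun_def)
      ultimately show "z \<in> gauge_ball L p a e1 \<inter> gauge_ball L q a e2" by (simp add: gauge_ball_def)
    qed
    with p(2,3) q(2,3) r(1) show "\<exists>r\<in>P. \<exists>e>0. gauge_ball L r a e \<subseteq> S \<inter> T"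
      by (intro bexI[of _ r] exI[of _ "min e1 e2"]) auto
  qed
next
  fix K assume K: "\<forall>S\<in>K. gauge_open L P S"
  show "gauge_open L P (\<Union>K)"
  proof (rule gauge_openI)
    show "\<Union>K \<subseteq> L" using K gauge_openD(1) by blast
    fix a assume "a \<in> \<Union>K"
    then obtain S where "S \<in> K" "a \<in> S" by blast
    then obtain p e where "p \<in> P" "e > 0" "gauge_ball L p a e \<subseteq> S"
      using K gauge_openD(2) by blast
    with \<open>S \<in> K\<close> show "\<exists>p\<in>P. \<exists>e>0. gauge_ball L p a e \<subseteq> \<Union>K" by blast
  qed
qed
lemma openin_gauge_topology: "openin (gauge_topology L P) U \<longleftrightarrow> gauge_open L P U"
  by (simp add: gauge_topology_def istopology_gauge_open)

lemma topspace_gauge_topology: "topspace (gauge_topology L P) = L"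
proof
  show "topspace (gauge_topology L P) \<subseteq> L"
    by (metis gauge_open_def openin_gauge_topology openin_topspace)
  obtain p where "p \<in> P" using nonempty by blast
  then have "gauge_open L P L"
    unfolding gauge_open_def gauge_ball_def using zero_less_one by blast
  then show "L \<subseteq> topspace (gauge_topology L P)"
    by (simp add: openin_subset flip: openin_gauge_topology)
qed

lemma openin_gauge_ball:
  assumes "p \<in> P" shows "openin (gauge_topology L P) (gauge_ball L p a e)"
proof -
  have p: "lattice_gauge p" using assms by (rule gauge)
  have "\<exists>q\<in>P. \<exists>e'>0. gauge_ball L q b e' \<subseteq> gauge_ball L p a e" if "b \<in> gauge_ball L p a e" for b
  proof (intro bexI exI conjI)
    show "0 < e - p (b - a)" using that by (simp add: gauge_ball_def)
    show "gauge_ball L p b (e - p (b - a)) \<subseteq> gauge_ball L p a e"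
    proof
      fix z assume "z \<in> gauge_ball L p b (e - p (b - a))"
      with lattice_gauge_diff_triangle[OF p, of z a b] show "z \<in> gauge_ball L p a e"
        by (simp add: gauge_ball_def)
    qed
  qed (rule assms)
  moreover have "gauge_ball L p a e \<subseteq> L" by (auto simp: gauge_ball_def)
  ultimately show ?thesis by (simp add: openin_gauge_topology gauge_open_def)
qed

lemma Hausdorff_space_gauge_topology: "Hausdorff_space (gauge_topology L P)"
  unfolding Hausdorff_space_def topspace_gauge_topology
proof (intro allI impI)
  fix a b assume ab: "a \<in> L \<and> b \<in> L \<and> a \<noteq> b"
  then have "a - b \<in> L" "a - b \<noteq> 0" using subspace_diff[OF subspace] by auto
  then obtain p where p: "p \<in> P" "0 < p (a - b)" using separating by blast
  have gp: "lattice_gauge p" using p(1) by (rule gauge)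
  define e where "e = p (a - b) / 2"
  have "disjnt (gauge_ball L p a e) (gauge_ball L p b e)"
    unfolding disjnt_iff
  proof (intro allI notI)
    fix z assume "z \<in> gauge_ball L p a e \<and> z \<in> gauge_ball L p b e"
    then have "p (a - z) < e" "p (z - b) < e"
      by (simp_all add: gauge_ball_def lattice_gauge_diff_commute[OF gp, of a])
    with lattice_gauge_diff_triangle[OF gp, of a b z] show False by (simp add: e_def)
  qed
  moreover have "a \<in> gauge_ball L p a e" "b \<in> gauge_ball L p b e"
    using centre_in_gauge_ball[OF gp] ab p(2) by (auto simp: e_def)
  ultimately show "\<exists>U V. openin (gauge_topology L P) U \<and> openin (gauge_topology L P) V \<and>
      a \<in> U \<and> b \<in> V \<and> disjnt U V"
    using openin_gauge_ball[OF p(1), of a e] openin_gauge_ball[OF p(1), of b e] by blast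
qed

lemma continuous_map_gauge_add:
  "continuous_map (prod_topology (gauge_topology L P) (gauge_topology L P)) (gauge_topology L P)
     (\<lambda>(a, b). a + b)"
  unfolding continuous_map_def topspace_prod_topology topspace_gauge_topology
proof (intro conjI allI impI)
  show "(\<lambda>(a, b). a + b) \<in> L \<times> L \<rightarrow> L" using subspace_add[OF subspace] by auto
  fix U assume "openin (gauge_topology L P) U"
  then have U: "gauge_open L P U" by (simp add: openin_gauge_topology)
  show "openin (prod_topology (gauge_topology L P) (gauge_topology L P))
      {x \<in> L \<times> L. (\<lambda>(a, b). a + b) x \<in> U}"
    unfolding openin_prod_topology_alt
  proof (intro allI impI)
    fix a b assume "(a, b) \<in> {x \<in> L \<times> L. (\<lambda>(a, b). a + b) x \<in> U}"
    then have ab: "a \<in> L" "b \<in> L" "a + b \<in> U" by auto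
    obtain p e where p: "p \<in> P" "e > 0" "gauge_ball L p (a + b) e \<subseteq> U"
      using gauge_openD(2)[OF U ab(3)] by blast
    have gp: "lattice_gauge p" using p(1) by (rule gauge)
    have "gauge_ball L p a (e/2) \<times> gauge_ball L p b (e/2) \<subseteq> {x \<in> L \<times> L. (\<lambda>(a, b). a + b) x \<in> U}"
    proof
      fix x assume "x \<in> gauge_ball L p a (e/2) \<times> gauge_ball L p b (e/2)"
      then obtain z w where x: "x = (z, w)" "z \<in> gauge_ball L p a (e/2)" "w \<in> gauge_ball L p b (e/2)"
        by blast
      then have zw: "z \<in> L" "w \<in> L" "p (z - a) < e/2" "p (w - b) < e/2"
        by (simp_all add: gauge_ball_def)
      have "p ((z + w) - (a + b)) \<le> p (z - a) + p (w - b)"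
        using lattice_gauge_add[OF gp, of "z - a" "w - b"] by (simp add: algebra_simps)
      with zw have "z + w \<in> gauge_ball L p (a + b) e"
        by (simp add: gauge_ball_def subspace_add[OF subspace])
      with p(3) zw(1,2) x(1) show "x \<in> {x \<in> L \<times> L. (\<lambda>(a, b). a + b) x \<in> U}" by auto
    qed
    moreover have "a \<in> gauge_ball L p a (e/2)" "b \<in> gauge_ball L p b (e/2)"
      using centre_in_gauge_ball[OF gp] ab(1,2) p(2) by simp_all
    ultimately show "\<exists>A B. openin (gauge_topology L P) A \<and> openin (gauge_topology L P) B \<and>
        a \<in> A \<and> b \<in> B \<and> A \<times> B \<subseteq> {x \<in> L \<times> L. (\<lambda>(a, b). a + b) x \<in> U}"
      using openin_gauge_ball[OF p(1), of a "e/2"] openin_gauge_ball[OF p(1), of b "e/2"] by blast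
  qed
qed

lemma continuous_map_gauge_scaleR:
  "continuous_map (prod_topology euclideanreal (gauge_topology L P)) (gauge_topology L P)
     (\<lambda>(c, a). c *\<^sub>R a)"
  unfolding continuous_map_def topspace_prod_topology topspace_gauge_topology topspace_euclidean
proof (intro conjI allI impI)
  show "(\<lambda>(c, a). c *\<^sub>R a) \<in> UNIV \<times> L \<rightarrow> L" using subspace_mul[OF subspace] by auto
  fix U assume "openin (gauge_topology L P) U"
  then have U: "gauge_open L P U" by (simp add: openin_gauge_topology)
  show "openin (prod_topology euclideanreal (gauge_topology L P))
      {x \<in> UNIV \<times> L. (\<lambda>(c, a). c *\<^sub>R a) x \<in> U}"
    unfolding openin_prod_topology_alt
  proof (intro allI impI)
    fix c a assume "(c, a) \<in> {x \<in> UNIV \<times> L. (\<lambda>(c, a). c *\<^sub>R a) x \<in> U}"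
    then have ca: "a \<in> L" "c *\<^sub>R a \<in> U" by auto
    obtain p e where p: "p \<in> P" "e > 0" "gauge_ball L p (c *\<^sub>R a) e \<subseteq> U"
      using gauge_openD(2)[OF U ca(2)] by blast
    have gp: "lattice_gauge p" using p(1) by (rule gauge)
    define K where "K = \<bar>c\<bar> + 2"
    define d where "d = min 1 (e / (2 * (norm a + 1)))"
    have K: "0 < K" by (simp add: K_def)
    have d: "0 < d" using p(2) by (simp add: d_def add_nonneg_pos)
    have "ball c d \<times> gauge_ball L p a (e / (2 * K)) \<subseteq> {x \<in> UNIV \<times> L. (\<lambda>(c, a). c *\<^sub>R a) x \<in> U}"
    proof
      fix x assume "x \<in> ball c d \<times> gauge_ball L p a (e / (2 * K))"
      then obtain c' z where x: "x = (c', z)" "\<bar>c' - c\<bar> < d" "z \<in> L" "p (z - a) < e / (2 * K)"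
        by (auto simp: gauge_ball_def dist_real_def abs_minus_commute)
      then have "p (c' *\<^sub>R z - c *\<^sub>R a) < e"
        using lattice_gauge_scaleR_diff_less[OF gp p(2)] by (simp add: K_def d_def)
      then have "c' *\<^sub>R z \<in> gauge_ball L p (c *\<^sub>R a) e"
        using x(3) by (simp add: gauge_ball_def subspace_mul[OF subspace])
      with p(3) x(1,3) show "x \<in> {x \<in> UNIV \<times> L. (\<lambda>(c, a). c *\<^sub>R a) x \<in> U}" by auto
    qed
    moreover have "c \<in> ball c d" "a \<in> gauge_ball L p a (e / (2 * K))"
      using centre_in_gauge_ball[OF gp] ca(1) p(2) d K by simp_all
    moreover have "openin euclideanreal (ball c d)" by (simp flip: open_openin)
    ultimately show "\<exists>A B. openin euclideanreal A \<and> openin (gauge_topology L P) B \<and>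
        c \<in> A \<and> a \<in> B \<and> A \<times> B \<subseteq> {x \<in> UNIV \<times> L. (\<lambda>(c, a). c *\<^sub>R a) x \<in> U}"
      using openin_gauge_ball[OF p(1), of a "e / (2 * K)"]
      by (intro exI[of _ "ball c d"] exI[of _ "gauge_ball L p a (e / (2 * K))"] conjI)
  qed
qed

lemma linear_topology_on_gauge_topology: "linear_topology_on L (gauge_topology L P)"
  unfolding linear_topology_on_def
  by (intro conjI topspace_gauge_topology Hausdorff_space_gauge_topology continuous_map_gauge_add
      continuous_map_gauge_scaleR)

lemma locally_solid_on_gauge_topology: "locally_solid_on L (gauge_topology L P)"
  unfolding locally_solid_on_def
proof (intro conjI allI impI linear_topology_on_gauge_topology)
  fix U assume "openin (gauge_topology L P) U \<and> 0 \<in> U"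
  then have "gauge_open L P U" "0 \<in> U" by (simp_all add: openin_gauge_topology)
  then obtain p e where p: "p \<in> P" "e > 0" "gauge_ball L p 0 e \<subseteq> U"
    using gauge_openD(2) by blast
  have gp: "lattice_gauge p" using p(1) by (rule gauge)
  have "0 \<in> gauge_ball L p 0 e" using centre_in_gauge_ball[OF gp subspace_0[OF subspace] p(2)] .
  with p(3) solid_in_gauge_ball[OF gp] openin_gauge_ball[OF p(1)]
  show "\<exists>S V. solid_in L S \<and> openin (gauge_topology L P) V \<and> 0 \<in> V \<and> V \<subseteq> S \<and> S \<subseteq> U"
    by (intro exI[of _ "gauge_ball L p 0 e"] conjI) simp_all
qed

lemma Cauchy_if_top_cauchy:
  assumes "top_cauchy (gauge_topology L P) s" "p \<in> P" "\<And>m n. norm (s m - s n) \<le> p (s m - s n)"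
  shows "Cauchy s"
proof (rule CauchyI)
  fix e :: real assume "0 < e"
  have "openin (gauge_topology L P) (gauge_ball L p 0 e)" by (rule openin_gauge_ball[OF assms(2)])
  moreover have "0 \<in> gauge_ball L p 0 e"
    using centre_in_gauge_ball[OF gauge[OF assms(2)] subspace_0[OF subspace] \<open>0 < e\<close>] .
  ultimately obtain N where N: "\<forall>m\<ge>N. \<forall>n\<ge>N. s m - s n \<in> gauge_ball L p 0 e"
    using assms(1) unfolding top_cauchy_def by blast
  have "norm (s m - s n) < e" if "m \<ge> N" "n \<ge> N" for m n
  proof -
    have "p (s m - s n) < e" using N that by (simp add: gauge_ball_def)
    with assms(3)[of m n] show ?thesis by linarith
  qed
  then show "\<exists>M. \<forall>m\<ge>M. \<forall>n\<ge>M. norm (s m - s n) < e" by blast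
qed

lemma limitin_gauge_topology_if_LIMSEQ:
  assumes "s \<longlonglongrightarrow> l" "\<And>n. s n \<in> L" "l \<in> L"
  shows "limitin (gauge_topology L P) s l sequentially"
  unfolding limitin_def topspace_gauge_topology
proof (intro conjI allI impI \<open>l \<in> L\<close>)
  fix U assume "openin (gauge_topology L P) U \<and> l \<in> U"
  then have "gauge_open L P U" "l \<in> U" by (simp_all add: openin_gauge_topology)
  then obtain p e where p: "p \<in> P" "0 < e" "gauge_ball L p l e \<subseteq> U"
    using gauge_openD(2) by blast
  from assms(1) p(2) have "\<forall>\<^sub>F n in sequentially. norm (s n - l) < e"
    by (simp add: tendsto_iff dist_norm)
  then show "\<forall>\<^sub>F n in sequentially. s n \<in> U"
  proof eventually_elim
    case (elim n)
    with lattice_gauge_le_norm[OF gauge[OF p(1)], of "s n - l"] assms(2)[of n]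
    have "s n \<in> gauge_ball L p l e" by (simp add: gauge_ball_def)
    with p(3) show ?case by blast
  qed
qed

lemma atLeastAtMost_sequentially_complete:
  assumes "p \<in> P" "{0..x} \<subseteq> L" "\<And>v. \<bar>v\<bar> \<le> x \<Longrightarrow> p v = norm v"
    and "\<forall>n. s n \<in> {0..x}" "top_cauchy (gauge_topology L P) s"
  shows "\<exists>l\<in>{0..x}. limitin (gauge_topology L P) s l sequentially"
proof -
  have "norm (s m - s n) \<le> p (s m - s n)" for m n
    using assms(3)[OF abs_diff_le_if_atLeastAtMost] assms(4) by simp
  then have "Cauchy s" by (rule Cauchy_if_top_cauchy[OF assms(5,1)])
  then obtain l where l: "s \<longlonglongrightarrow> l" by (auto simp: Cauchy_convergent_iff convergent_def)
  have "l \<in> {0..x}"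
    using closed_sequentially[OF closed_atLeastAtMost_lattice] assms(4) l by blast
  moreover have "s n \<in> L" for n using assms(2,4) by blast
  ultimately show ?thesis
    using limitin_gauge_topology_if_LIMSEQ[OF l] assms(2) by blast
qed

end

lemma metrizable_space_gauge_topology_single:
  assumes "gauge_family L {p}" shows "metrizable_space (gauge_topology L {p})"
proof -
  interpret gauge_family L "{p}" by (rule assms)
  have gp: "lattice_gauge p" by (simp add: gauge)
  interpret M: Metric_space L "\<lambda>a b. p (a - b)"
  proof
    show "0 \<le> p (x - y)" for x y by (rule lattice_gauge_nonneg[OF gp])
    show "p (x - y) = p (y - x)" for x y by (rule lattice_gauge_diff_commute[OF gp])
    show "p (x - z) \<le> p (x - y) + p (y - z)" for x y z by (rule lattice_gauge_diff_triangle[OF gp])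
    show "p (x - y) = 0 \<longleftrightarrow> x = y" if "x \<in> L" "y \<in> L" for x y
      using separating[of "x - y"] subspace_diff[OF subspace that] lattice_gauge_zero[OF gp]
      by force
  qed
  have "gauge_open L {p} = M.mopen"
  proof
    fix U
    have balls: "M.mball a r = gauge_ball L p a r" if "a \<in> L" for a r
      using that lattice_gauge_diff_commute[OF gp] by (auto simp: M.mball_def gauge_ball_def)
    show "gauge_open L {p} U = M.mopen U"
    proof (cases "U \<subseteq> L")
      case True
      then have "\<And>a r. a \<in> U \<Longrightarrow> M.mball a r = gauge_ball L p a r" using balls by blast
      with True show ?thesis unfolding gauge_open_def M.mopen_def by (simp add: Ball_def)
    qed (simp add: gauge_open_def M.mopen_def)
  qed
  then have "gauge_topology L {p} = M.mtopology" by (simp add: gauge_topology_def M.mtopology_def)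
  then show ?thesis using M.metrizable_space_mtopology by simp
qed

lemma openin_subtopology_gauge_topology:
  assumes L: "gauge_family L P'" and UNIV: "gauge_family UNIV P" and "P' \<subseteq> P"
    and "openin (gauge_topology L P') U"
  shows "openin (subtopology (gauge_topology UNIV P) L) U"
  unfolding openin_subopen[of _ U]
proof
  fix a assume "a \<in> U"
  from assms(4) have U: "gauge_open L P' U" by (simp add: gauge_family.openin_gauge_topology[OF L])
  with \<open>a \<in> U\<close> obtain p e where p: "p \<in> P'" "0 < e" "gauge_ball L p a e \<subseteq> U"
    using gauge_openD(2) by blast
  have "gauge_ball L p a e = gauge_ball UNIV p a e \<inter> L" by (auto simp: gauge_ball_def)
  moreover have "openin (gauge_topology UNIV P) (gauge_ball UNIV p a e)"
    using gauge_family.openin_gauge_ball[OF UNIV] p(1) \<open>P' \<subseteq> P\<close> by blast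
  ultimately have "openin (subtopology (gauge_topology UNIV P) L) (gauge_ball L p a e)"
    by (simp add: openin_subtopology_Int)
  moreover have "a \<in> gauge_ball L p a e"
    using centre_in_gauge_ball[OF gauge_family.gauge[OF L p(1)]] gauge_openD(1)[OF U] \<open>a \<in> U\<close> p(2)
    by blast
  ultimately show "\<exists>T. openin (subtopology (gauge_topology UNIV P) L) T \<and> a \<in> T \<and> T \<subseteq> U"
    using p(3) by blast
qed

lemma lics_submetrisable_gauge_topology:
  assumes UNIV: "gauge_family UNIV P"
    and bands: "\<And>x. 0 \<le> x \<Longrightarrow> \<exists>p\<in>P. gauge_family (band_gen x) {p} \<and> (\<forall>v. \<bar>v\<bar> \<le> x \<longrightarrow> p v = norm v)"
  shows "lics_submetrisable (gauge_topology UNIV P)"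
  unfolding lics_submetrisable_def
proof (intro conjI allI impI)
  show "locally_solid_on UNIV (gauge_topology UNIV P)"
    by (rule gauge_family.locally_solid_on_gauge_topology[OF UNIV])
  fix x :: 'a assume "0 \<le> x"
  then obtain p where p: "p \<in> P" and B: "gauge_family (band_gen x) {p}"
    and eq: "\<And>v. \<bar>v\<bar> \<le> x \<Longrightarrow> p v = norm v"
    using bands by blast
  have interval: "{0..x} \<subseteq> band_gen x"
    by (rule atLeastAtMost_subset_ideal_lat[OF ideal_lat_band_gen mem_band_gen])
  show "\<exists>\<sigma>. locally_solid_on (band_gen x) \<sigma> \<and> metrizable_space \<sigma> \<and>
      (\<forall>U. openin \<sigma> U \<longrightarrow> openin (subtopology (gauge_topology UNIV P) (band_gen x)) U) \<and>
      (\<forall>s. (\<forall>n. s n \<in> {0..x}) \<and> top_cauchy \<sigma> s \<longrightarrow> (\<exists>l\<in>{0..x}. limitin \<sigma> s l sequentially))"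
  proof (intro exI[of _ "gauge_topology (band_gen x) {p}"] conjI allI impI)
    show "locally_solid_on (band_gen x) (gauge_topology (band_gen x) {p})"
      by (rule gauge_family.locally_solid_on_gauge_topology[OF B])
    show "metrizable_space (gauge_topology (band_gen x) {p})"
      by (rule metrizable_space_gauge_topology_single[OF B])
    show "openin (subtopology (gauge_topology UNIV P) (band_gen x)) U"
      if "openin (gauge_topology (band_gen x) {p}) U" for U
      using openin_subtopology_gauge_topology[OF B UNIV _ that] p by blast
    show "\<exists>l\<in>{0..x}. limitin (gauge_topology (band_gen x) {p}) s l sequentially"
      if "(\<forall>n. s n \<in> {0..x}) \<and> top_cauchy (gauge_topology (band_gen x) {p}) s" for s
      using gauge_family.atLeastAtMost_sequentially_complete[OF B _ interval eq] that by blast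
  qed
qed

section \<open>The norm and the unbounded norm topology\<close>

lemma lattice_gauge_norm: "lattice_gauge (norm :: 'a::banach_lattice \<Rightarrow> real)"
  by (intro lattice_gaugeI norm_triangle_ineq norm_lattice_mono order.refl)

definition un_gauge :: "'a::banach_lattice \<Rightarrow> 'a \<Rightarrow> real" where
  "un_gauge y v = norm (inf \<bar>v\<bar> \<bar>y\<bar>)"

lemma lattice_gauge_un_gauge: "lattice_gauge (un_gauge y)"
proof (rule lattice_gaugeI)
  fix u v :: 'a
  have "inf \<bar>u + v\<bar> \<bar>y\<bar> \<le> inf (\<bar>u\<bar> + \<bar>v\<bar>) \<bar>y\<bar>" by (intro inf_mono abs_triangle_ineq order.refl)
  also have "\<dots> \<le> inf \<bar>u\<bar> \<bar>y\<bar> + inf \<bar>v\<bar> \<bar>y\<bar>" by (intro inf_add_le_add_inf) simp_all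
  finally have "un_gauge y (u + v) \<le> norm (inf \<bar>u\<bar> \<bar>y\<bar> + inf \<bar>v\<bar> \<bar>y\<bar>)"
    unfolding un_gauge_def by (intro norm_mono_nonneg) simp_all
  also have "\<dots> \<le> un_gauge y u + un_gauge y v" unfolding un_gauge_def by (rule norm_triangle_ineq)
  finally show "un_gauge y (u + v) \<le> un_gauge y u + un_gauge y v" .
next
  fix u v :: 'a assume "\<bar>u\<bar> \<le> \<bar>v\<bar>"
  then show "un_gauge y u \<le> un_gauge y v"
    unfolding un_gauge_def by (intro norm_mono_nonneg inf_mono) simp_all
next
  fix z :: 'a
  have "norm (inf \<bar>z\<bar> \<bar>y\<bar>) \<le> norm \<bar>z\<bar>" by (intro norm_mono_nonneg) simp_all
  then show "un_gauge y z \<le> norm z" by (simp add: un_gauge_def norm_abs_lattice)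
qed

lemma un_gauge_mono: "\<bar>y\<bar> \<le> \<bar>y'\<bar> \<Longrightarrow> un_gauge y v \<le> un_gauge y' v"
  unfolding un_gauge_def by (intro norm_mono_nonneg inf_mono) simp_all

lemma un_gauge_eq_norm: "\<bar>v\<bar> \<le> \<bar>y\<bar> \<Longrightarrow> un_gauge y v = norm v"
  by (simp add: un_gauge_def inf_absorb1 norm_abs_lattice)

lemma gauge_family_norm: "subspace L \<Longrightarrow> gauge_family L {norm}"
  by unfold_locales (auto simp: lattice_gauge_norm)

lemma gauge_family_un_gauge: "gauge_family UNIV (range un_gauge)"
proof
  show "lattice_gauge p" if "p \<in> range un_gauge" for p using that lattice_gauge_un_gauge by blast
  show "\<exists>r\<in>range un_gauge. p \<le> r \<and> q \<le> r" if pq: "p \<in> range un_gauge" "q \<in> range un_gauge" for p q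
  proof -
    obtain y y' where "p = un_gauge y" "q = un_gauge y'" using pq by blast
    then have "p \<le> un_gauge (\<bar>y\<bar> + \<bar>y'\<bar>)" "q \<le> un_gauge (\<bar>y\<bar> + \<bar>y'\<bar>)"
      by (auto simp: le_fun_def abs_of_nonneg intro!: un_gauge_mono)
    then show ?thesis by blast
  qed
  show "\<exists>p\<in>range un_gauge. 0 < p z" if "z \<noteq> 0" for z :: 'a
  proof (rule bexI[of _ "un_gauge z"])
    show "0 < un_gauge z z" using that by (simp add: un_gauge_eq_norm)
  qed simp
qed simp_all

lemma gauge_family_band_gen_un_gauge: "gauge_family (band_gen x) {un_gauge x}"
proof
  show "subspace (band_gen x)" by (rule subspace_if_ideal_lat[OF ideal_lat_band_gen])
  show "\<exists>p\<in>{un_gauge x}. 0 < p z" if "z \<in> band_gen x" "z \<noteq> 0" for z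
    using band_gen_disjoint_eq_0[OF that(1)] that(2) by (auto simp: un_gauge_def)
qed (auto simp: lattice_gauge_un_gauge)

lemma euclidean_eq_gauge_topology_norm: "euclidean = gauge_topology UNIV {norm}"
proof -
  have "gauge_ball UNIV norm a e = ball a e" for a :: 'a and e
    by (auto simp: gauge_ball_def dist_norm norm_minus_commute)
  then show ?thesis
    unfolding topology_eq gauge_family.openin_gauge_topology[OF gauge_family_norm[OF subspace_UNIV]]
    by (simp add: gauge_open_def open_contains_ball flip: open_openin)
qed

lemma un_topology_eq_gauge_topology: "un_topology = gauge_topology UNIV (range un_gauge)"
  unfolding un_topology_def gauge_topology_def gauge_open_def gauge_ball_def un_gauge_def
  by (intro arg_cong[where f = topology] ext) (auto; blast)

theorem proposition3p9:
  shows "lics_submetrisable (euclidean :: 'a::banach_lattice topology) \<and>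
         lics_submetrisable (un_topology :: 'a::banach_lattice topology)"
proof
  have "lics_submetrisable (gauge_topology UNIV {norm :: 'a \<Rightarrow> real})"
    using gauge_family_norm[OF subspace_UNIV]
      gauge_family_norm[OF subspace_if_ideal_lat[OF ideal_lat_band_gen]]
    by (intro lics_submetrisable_gauge_topology) auto
  then show "lics_submetrisable (euclidean :: 'a topology)"
    by (simp add: euclidean_eq_gauge_topology_norm)
  have "lics_submetrisable (gauge_topology UNIV (range (un_gauge :: 'a \<Rightarrow> _)))"
  proof (rule lics_submetrisable_gauge_topology[OF gauge_family_un_gauge])
    fix x :: 'a assume "0 \<le> x"
    then have "un_gauge x v = norm v" if "\<bar>v\<bar> \<le> x" for v
      using un_gauge_eq_norm[of v x] that \<open>0 \<le> x\<close> by (simp add: abs_of_nonneg)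
    then show "\<exists>p\<in>range un_gauge. gauge_family (band_gen x) {p} \<and> (\<forall>v. \<bar>v\<bar> \<le> x \<longrightarrow> p v = norm v)"
      using gauge_family_band_gen_un_gauge by blast
  qed
  then show "lics_submetrisable (un_topology :: 'a topology)"
    by (simp add: un_topology_eq_gauge_topology)
qed

end
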